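(* In the setting described in the context, with the Poisson tensors $\pi_s$, $s=0,\dots,\alpha$, and the notation $h^{(k)}_j:=c^{(k)}_{1-j}$ for $j=0,-1,\dots,-\alpha+1$, for each $k\in\{1,\dots,m\}$ and each pair $0\le i<j\le\alpha$ one has the bi-Hamiltonian chain $$\pi_i\,dh^{(k)}_{-i}=0,\qquad \pi_i\,dh^{(k)}_{-i+r}=X^{(k)}_r=\pi_j\,dh^{(k)}_{-j+r}\ \ (r=1,\dots,n_k),\qquad \pi_j\,dh^{(k)}_{-j+n_k+1}=0.$$ In particular, for each $k$ there are $\binom{\alpha+1}{2}$ such bi-Hamiltonian chains.
   Context: Let $n,m\ge1$, $n_1,\dots,n_m\ge1$ integers with $n_1+\dots+n_m=n$, and $\alpha$ an integer with $1\le\alpha\le\min_k n_k$; set $N=\alpha m$. Let $\varphi_0,\varphi_1,\dots,\varphi_m$ be smooth functions of $(\lambda,\mu)$ with $\varphi_m\equiv1$. Consider the curve $$\varphi_0(\lambda,\mu)+\sum_{k=1}^m\varphi_k(\lambda,\mu)\,\psi_k(\lambda)=0,\qquad \psi_k(\lambda)=c^{(k)}_\alpha\lambda^{n_k-1+\alpha}+\dots+c^{(k)}_1\lambda^{n_k}+\sum_{i=1}^{n_k}a^{(k)}_i\lambda^{n_k-i}.$$ Taking $n$ copies with $(\lambda,\mu)$ replaced by $(\lambda_j,\mu_j)$, $j=1,\dots,n$, and solving (assumed possible on an open domain, with nondegenerate Jacobian) for the $a^{(k)}_i$ gives $a^{(k)}_i=h^{(k)}_i(\boldsymbol\lambda,\boldsymbol\mu,\mathbf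 c)$ on an open set $\mathcal M\subset\mathbb{R}^{2n+N}$ with coordinates $(\boldsymbol\lambda,\boldsymbol\mu,\mathbf c)$, $\mathbf c=(c^{(k)}_j)_{k\le m,\,j\le\alpha}$. Set $\pi_0=\sum_{i=1}^n\partial_{\lambda_i}\wedge\partial_{\mu_i}$, $X^{(k)}_i=\pi_0\,dh^{(k)}_i$, and for $s=0,\dots,\alpha$ $$\pi_s=\sum_{i=1}^n\lambda_i^s\frac{\partial}{\partial\lambda_i}\wedge\frac{\partial}{\partial\mu_i}+\sum_{k=1}^m\sum_{j=1}^s X^{(k)}_j\wedge\frac{\partial}{\partial c^{(k)}_{s-j+1}}.$$ *)

theory Defs
  imports "HOL-Analysis.Analysis"
begin

(* Coordinates on R^{2n+N}: Lam i = lambda_i, Mu i = mu_i, Cc k j = c^{(k)}_j.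
   A point is a function coord => real; only the coordinates in coords n m alpha matter,
   all others are required to be 0 on the domain M (see coord_open). *)
datatype coord = Lam nat | Mu nat | Cc nat nat

type_synonym point = "coord \<Rightarrow> real"

definition coords :: "nat \<Rightarrow> nat \<Rightarrow> nat \<Rightarrow> coord set" where
  "coords n m \<alpha> = Lam ` {1..n} \<union> Mu ` {1..n} \<union> {Cc k j | k j. k \<in> {1..m} \<and> j \<in> {1..\<alpha>}}"

(* the coordinate slice  {p. p x = 0 outside V}, identified with R^{card V} *)
definition slice :: "'c set \<Rightarrow> ('c \<Rightarrow> real) set" where
  "slice V = {p. \<forall>x. x \<notin> V \<longrightarrow> p x = 0}"

(* M is an open subset of the coordinate space R^V (product = Euclidean topology) *)
definition coord_open :: "'c set \<Rightarrow> ('c \<Rightarrow> real) set \<Rightarrow> bool" where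
  "coord_open V M \<longleftrightarrow> (\<exists>U. open U \<and> M = U \<inter> slice V)"

definition pd :: "'c \<Rightarrow> (('c \<Rightarrow> real) \<Rightarrow> real) \<Rightarrow> ('c \<Rightarrow> real) \<Rightarrow> real" where
  "pd x f p = deriv (\<lambda>t. f (p(x := t))) (p x)"

fun ipd :: "'c list \<Rightarrow> (('c \<Rightarrow> real) \<Rightarrow> real) \<Rightarrow> ('c \<Rightarrow> real) \<Rightarrow> real" where
  "ipd [] f = f"
| "ipd (x # xs) f = pd x (ipd xs f)"

definition smooth_on :: "'c set \<Rightarrow> ('c \<Rightarrow> real) set \<Rightarrow> (('c \<Rightarrow> real) \<Rightarrow> real) \<Rightarrow> bool" where
  "smooth_on V S f \<longleftrightarrow>
     (\<forall>xs. set xs \<subseteq> V \<longrightarrow> continuous_on S (ipd xs f) \<and>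
        (\<forall>x\<in>V. \<forall>p\<in>S. (\<lambda>t. ipd xs f (p(x := t))) differentiable (at (p x))))"

(* smooth function of (lambda, mu) on R^2 (coordinates: True = lambda, False = mu) *)
definition smooth2 :: "(real \<Rightarrow> real \<Rightarrow> real) \<Rightarrow> bool" where
  "smooth2 g \<longleftrightarrow> smooth_on (UNIV :: bool set) UNIV (\<lambda>p. g (p True) (p False))"

type_synonym vfield = "coord \<Rightarrow> point \<Rightarrow> real"
type_synonym bivector = "coord \<Rightarrow> coord \<Rightarrow> point \<Rightarrow> real"

definition basis :: "coord \<Rightarrow> vfield" where
  "basis x = (\<lambda>y p. if y = x then 1 else 0)"

definition wedge :: "vfield \<Rightarrow> vfield \<Rightarrow> bivector" where
  "wedge u v = (\<lambda>x y p. u x p * v y p - u y p * v x p)"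

definition contr :: "coord set \<Rightarrow> bivector \<Rightarrow> (point \<Rightarrow> real) \<Rightarrow> vfield" where
  "contr V P f = (\<lambda>x p. \<Sum>y\<in>V. P x y p * pd y f p)"

definition psi :: "nat \<Rightarrow> nat \<Rightarrow> (nat \<Rightarrow> real) \<Rightarrow> (nat \<Rightarrow> real) \<Rightarrow> real \<Rightarrow> real" where
  "psi nk \<alpha> c a l = (\<Sum>j=1..\<alpha>. c j * l ^ (nk - 1 + j)) + (\<Sum>i=1..nk. a i * l ^ (nk - i))"

definition pi0 :: "nat \<Rightarrow> bivector" where
  "pi0 n = (\<lambda>x y p. \<Sum>i=1..n. wedge (basis (Lam i)) (basis (Mu i)) x y p)"

definition Xf :: "coord set \<Rightarrow> nat \<Rightarrow> (nat \<Rightarrow> nat \<Rightarrow> point \<Rightarrow> real) \<Rightarrow> nat \<Rightarrow> nat \<Rightarrow> vfield" where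
  "Xf V n h k i = contr V (pi0 n) (h k i)"

definition pis :: "coord set \<Rightarrow> nat \<Rightarrow> nat \<Rightarrow> (nat \<Rightarrow> nat \<Rightarrow> point \<Rightarrow> real) \<Rightarrow> nat \<Rightarrow> bivector" where
  "pis V n m h s = (\<lambda>x y p.
      (\<Sum>i=1..n. (p (Lam i)) ^ s * wedge (basis (Lam i)) (basis (Mu i)) x y p)
    + (\<Sum>k=1..m. \<Sum>j=1..s. wedge (Xf V n h k j) (basis (Cc k (s - j + 1))) x y p))"

definition Hext :: "(nat \<Rightarrow> nat \<Rightarrow> point \<Rightarrow> real) \<Rightarrow> nat \<Rightarrow> int \<Rightarrow> point \<Rightarrow> real" where
  "Hext h k j = (if j \<le> 0 then (\<lambda>p. p (Cc k (nat (1 - j)))) else h k (nat j))"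

end

theory Submission
  imports Defs
begin

text \<open>Differentiating the \<open>t\<close>-th copy of the curve along a coordinate other than \<open>\<lambda>\<^sub>t, \<mu>\<^sub>t\<close>
  gives a linear relation between partial derivatives of the \<open>h\<^sup>(\<^sup>k\<^sup>)\<^sub>s\<close>, and nondegeneracy turns
  relations holding on all \<open>n\<close> copies into coefficient identities. For \<open>\<partial> = \<partial>\<^sub>\<lambda>\<^sub>l\<close> or \<open>\<partial>\<^sub>\<mu>\<^sub>l\<close> the
  combination \<open>\<lambda>\<^sub>l\<^sup>i \<partial>h\<^sub>s + \<Sum> \<partial>h\<^sup>(\<^sup>k\<^sup>')\<^sub>j \<partial>\<^sub>c h\<^sub>s - \<partial>h\<^sub>s\<^sub>+\<^sub>i\<close> reduces on the \<open>t\<close>-th copy to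
  \<open>(\<lambda>\<^sub>l\<^sup>i - \<lambda>\<^sub>t\<^sup>i)\<close> times the value of the \<open>\<partial>h\<close> themselves, which vanishes for \<open>t \<noteq> l\<close>; this is
  the \<open>(\<lambda>, \<mu>)\<close>-part of \<open>\<pi>\<^sub>i dh\<^sub>s = X\<^sub>s\<^sub>+\<^sub>i\<close>. The same vanishing makes the vectors \<open>\<partial>\<^sub>\<lambda>\<^sub>l h\<close> and
  \<open>\<partial>\<^sub>\<mu>\<^sub>l h\<close> proportional, so the \<open>h\<^sup>(\<^sup>k\<^sup>)\<^sub>s\<close> Poisson commute and the \<open>c\<close>-part of \<open>\<pi>\<^sub>i dh\<^sub>s\<close> vanishes.
  Together with \<open>\<pi>\<^sub>i dc\<^sub>q = X\<^sub>i\<^sub>-\<^sub>q\<^sub>+\<^sub>1\<close>, read off from the definition, the chain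
  \<open>c\<^sub>i\<^sub>+\<^sub>1, \<dots>, c\<^sub>1, h\<^sub>1, \<dots>, h\<^sub>n\<^sub>k\<close> is mapped by \<open>\<pi>\<^sub>i\<close> to \<open>0, X\<^sub>1, \<dots>, X\<^sub>n\<^sub>k, 0\<close>.\<close>

lemma coord_open_eventually_update:
  assumes "coord_open V M" "p \<in> M" "z \<in> V"
  shows "\<forall>\<^sub>F \<tau> in nhds (p z). p(z := \<tau>) \<in> M"
proof -
  obtain U where U: "open U" "M = U \<inter> slice V"
    using assms(1) unfolding coord_open_def by blast
  have "continuous_on UNIV (\<lambda>\<tau>::real. p(z := \<tau>))"
  proof (rule continuous_on_coordinatewise_then_product)
    show "continuous_on UNIV (\<lambda>\<tau>. (p(z := \<tau>)) i)" for i
      by (cases "i = z") (auto intro: continuous_intros)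
  qed
  then have "open ((\<lambda>\<tau>. p(z := \<tau>)) -` U)"
    by (rule open_vimage[OF U(1)])
  moreover have "p z \<in> (\<lambda>\<tau>. p(z := \<tau>)) -` U"
    using assms U by auto
  ultimately have "\<forall>\<^sub>F \<tau> in nhds (p z). p(z := \<tau>) \<in> U"
    using eventually_nhds_in_open by fastforce
  then show ?thesis
    by eventually_elim (use assms U in \<open>auto simp: slice_def\<close>)
qed

lemma derivative_eq_0_if_vanishes_on_coord_open:
  assumes "coord_open V M" "p \<in> M" "z \<in> V" "\<forall>q\<in>M. g q = 0"
    and "((\<lambda>\<tau>. g (p(z := \<tau>))) has_real_derivative D) (at (p z))"
  shows "D = 0"
proof -
  have ev: "\<forall>\<^sub>F \<tau> in nhds (p z). g (p(z := \<tau>)) = 0"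
    using coord_open_eventually_update[OF assms(1-3)] by eventually_elim (use assms(4) in auto)
  then have "((\<lambda>\<tau>. g (p(z := \<tau>))) has_real_derivative 0) (at (p z))"
    by (subst DERIV_cong_ev[OF refl ev refl]) simp
  then show ?thesis
    using DERIV_unique assms(5) by blast
qed

lemma mem_coords [simp]:
  "Lam l \<in> coords n m \<alpha> \<longleftrightarrow> l \<in> {1..n}"
  "Mu l \<in> coords n m \<alpha> \<longleftrightarrow> l \<in> {1..n}"
  "Cc k q \<in> coords n m \<alpha> \<longleftrightarrow> k \<in> {1..m} \<and> q \<in> {1..\<alpha>}"
  by (auto simp: coords_def)

lemma finite_coords [simp]: "finite (coords n m \<alpha>)"
proof -
  have "{Cc k j | k j. k \<in> {1..m} \<and> j \<in> {1..\<alpha>}} = (\<lambda>(k, j). Cc k j) ` ({1..m} \<times> {1..\<alpha>})"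
    by auto
  then show ?thesis
    unfolding coords_def by simp
qed

lemma pd_coordinate: "pd y (\<lambda>q. q c) p = (if y = c then 1 else 0)"
  unfolding pd_def by (cases "y = c") auto

lemma if_0_arith_simps:
  "(if P then 1 else 0) * (x::real) = (if P then x else 0)"
  "x * (if P then 1 else 0) = (if P then x else 0)"
  "(if P then x else 0) * y = (if P then x * y else 0)"
  "y * (if P then x else 0) = (if P then y * x else 0)"
  "(if P then x else 0) - (if Q then z else 0) = (if P then x else 0) + (if Q then - z else 0)"
  by auto

lemma contr_add: "contr V (\<lambda>x y p. A x y p + B x y p) f x p = contr V A f x p + contr V B f x p"
  unfolding contr_def by (simp add: distrib_right sum.distrib)

lemma contr_pi0:
  "contr (coords n m \<alpha>) (pi0 n) f x p =
    (\<Sum>i=1..n. (if x = Lam i then pd (Mu i) f p else 0) - (if x = Mu i then pd (Lam i) f p else 0))"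
  unfolding contr_def pi0_def wedge_def basis_def sum_distrib_right
  by (subst sum.swap, rule sum.cong)
     (simp_all add: if_0_arith_simps sum.distrib distrib_right sum.delta sum.delta' sum_negf)

lemma Xf_Lam: "Xf (coords n m \<alpha>) n h k j (Lam l) p = (if l \<in> {1..n} then pd (Mu l) (h k j) p else 0)"
  unfolding Xf_def contr_pi0 by (simp add: sum.delta sum.delta')

lemma Xf_Mu: "Xf (coords n m \<alpha>) n h k j (Mu l) p = (if l \<in> {1..n} then - pd (Lam l) (h k j) p else 0)"
  unfolding Xf_def contr_pi0 by (simp add: sum.delta sum.delta' sum_negf)

lemma Xf_Cc: "Xf (coords n m \<alpha>) n h k j (Cc a b) p = 0"
  unfolding Xf_def contr_pi0 by simp

lemma sum_Xf_mult_pd: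
  "(\<Sum>y\<in>coords n m \<alpha>. Xf (coords n m \<alpha>) n h k j y p * pd y f p) =
   (\<Sum>l=1..n. pd (Mu l) (h k j) p * pd (Lam l) f p - pd (Lam l) (h k j) p * pd (Mu l) f p)"
  unfolding Xf_def contr_pi0 sum_distrib_right
  by (subst sum.swap, rule sum.cong)
     (simp_all add: if_0_arith_simps sum.distrib distrib_right sum.delta sum.delta' sum_negf)

lemma contr_pis:
  assumes "s \<le> \<alpha>"
  shows "contr (coords n m \<alpha>) (pis (coords n m \<alpha>) n m h s) f x p =
    (\<Sum>i=1..n. p (Lam i) ^ s *
        ((if x = Lam i then pd (Mu i) f p else 0) - (if x = Mu i then pd (Lam i) f p else 0)))
  + (\<Sum>k=1..m. \<Sum>j=1..s. Xf (coords n m \<alpha>) n h k j x p * pd (Cc k (s - j + 1)) f p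
      - (if x = Cc k (s - j + 1)
         then (\<Sum>y\<in>coords n m \<alpha>. Xf (coords n m \<alpha>) n h k j y p * pd y f p) else 0))"
proof -
  let ?V = "coords n m \<alpha>"
  have symplectic_part: "contr ?V (\<lambda>x y p. \<Sum>i=1..n. p (Lam i) ^ s * wedge (basis (Lam i)) (basis (Mu i)) x y p) f x p
     = (\<Sum>i=1..n. p (Lam i) ^ s *
        ((if x = Lam i then pd (Mu i) f p else 0) - (if x = Mu i then pd (Lam i) f p else 0)))"
    unfolding contr_def wedge_def basis_def sum_distrib_right
    by (subst sum.swap, rule sum.cong)
       (simp_all add: if_0_arith_simps sum.distrib distrib_right distrib_left sum.delta sum.delta'
         sum_negf flip: sum_distrib_left)
  have coupling_part: "contr ?V (\<lambda>x y p. \<Sum>k=1..m. \<Sum>j=1..s. wedge (Xf ?V n h k j) (basis (Cc k (s - j + 1))) x y p) f x p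
     = (\<Sum>k=1..m. \<Sum>j=1..s. Xf ?V n h k j x p * pd (Cc k (s - j + 1)) f p
      - (if x = Cc k (s - j + 1) then (\<Sum>y\<in>?V. Xf ?V n h k j y p * pd y f p) else 0))"
    unfolding contr_def sum_distrib_right
    apply (subst sum.swap[where A = ?V], rule sum.cong[OF refl])
    apply (subst sum.swap[where A = ?V], rule sum.cong[OF refl])
    using assms by (auto simp: wedge_def basis_def if_0_arith_simps left_diff_distrib sum_subtractf
        sum.delta sum.delta' sum_distrib_left)
  show ?thesis
    unfolding pis_def contr_add symplectic_part coupling_part ..
qed

lemma contr_pis_Lam:
  assumes "s \<le> \<alpha>"
  shows "contr (coords n m \<alpha>) (pis (coords n m \<alpha>) n m h s) f (Lam l) p =
    (if l \<in> {1..n} then p (Lam l) ^ s * pd (Mu l) f p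
       + (\<Sum>k=1..m. \<Sum>j=1..s. pd (Mu l) (h k j) p * pd (Cc k (s - j + 1)) f p) else 0)"
  unfolding contr_pis[OF assms] by (auto simp: Xf_Lam if_0_arith_simps sum.delta sum.delta')

lemma contr_pis_Mu:
  assumes "s \<le> \<alpha>"
  shows "contr (coords n m \<alpha>) (pis (coords n m \<alpha>) n m h s) f (Mu l) p =
    (if l \<in> {1..n} then - (p (Lam l) ^ s * pd (Lam l) f p
       + (\<Sum>k=1..m. \<Sum>j=1..s. pd (Lam l) (h k j) p * pd (Cc k (s - j + 1)) f p)) else 0)"
  unfolding contr_pis[OF assms] by (auto simp: Xf_Mu if_0_arith_simps sum.delta sum.delta' sum_negf)

lemma contr_pis_Cc:
  assumes "s \<le> \<alpha>"
  shows "contr (coords n m \<alpha>) (pis (coords n m \<alpha>) n m h s) f (Cc a b) p =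
    - (\<Sum>k=1..m. \<Sum>j=1..s. if Cc a b = Cc k (s - j + 1)
         then (\<Sum>y\<in>coords n m \<alpha>. Xf (coords n m \<alpha>) n h k j y p * pd y f p) else 0)"
  unfolding contr_pis[OF assms] by (simp add: Xf_Cc sum_negf)

lemma power_mult_coefficient_sum:
  fixes D :: "nat \<Rightarrow> 'a::comm_semiring_1"
  assumes "i \<le> N"
  shows "(\<Sum>j=1..i. D j * L ^ (N + i - j)) + (\<Sum>s=1..N. (if s + i \<le> N then D (s + i) else 0) * L ^ (N - s))
     = L ^ i * (\<Sum>s=1..N. D s * L ^ (N - s))"
proof -
  have "L ^ i * (\<Sum>s=1..N. D s * L ^ (N - s)) = (\<Sum>s=1..N. D s * L ^ (N + i - s))"
    unfolding sum_distrib_left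
  proof (intro sum.cong refl)
    fix s assume "s \<in> {1..N}"
    then have "N + i - s = i + (N - s)" by simp
    then show "L ^ i * (D s * L ^ (N - s)) = D s * L ^ (N + i - s)"
      by (simp add: power_add mult_ac)
  qed
  also have "\<dots> = (\<Sum>s=1..i. D s * L ^ (N + i - s)) + (\<Sum>s=i+1..N. D s * L ^ (N + i - s))"
    using assms by (subst sum.union_disjoint[symmetric]) (auto intro: sum.cong)
  also have "(\<Sum>s=i+1..N. D s * L ^ (N + i - s)) = (\<Sum>s=1..N-i. D (s + i) * L ^ (N - s))"
    using assms by (intro sum.reindex_bij_witness[of _ "\<lambda>s. s + i" "\<lambda>s. s - i"]) auto
  also have "\<dots> = (\<Sum>s=1..N. (if s + i \<le> N then D (s + i) else 0) * L ^ (N - s))"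
    using assms by (intro sum.mono_neutral_cong_left) auto
  finally show ?thesis by simp
qed

lemma det_eq_0_if_proportional:
  fixes E G u1 u2 w1 w2 :: "'a::idom"
  assumes "E * u1 = G * w1" "E * u2 = G * w2" and "E = 0 \<Longrightarrow> G = 0 \<Longrightarrow> u1 = 0 \<and> u2 = 0"
  shows "u1 * w2 - w1 * u2 = 0"
proof -
  have "E * (u1 * w2 - w1 * u2) = (E * u1) * w2 - w1 * (E * u2)"
    by (simp add: algebra_simps)
  also have "\<dots> = 0"
    using assms(1,2) by simp
  finally have E: "E * (u1 * w2 - w1 * u2) = 0" .
  have "G * (u1 * w2 - w1 * u2) = u1 * (G * w2) - (G * w1) * u2"
    by (simp add: algebra_simps)
  also have "\<dots> = u1 * (E * u2) - (E * u1) * u2"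
    by (simp only: assms(1,2))
  also have "\<dots> = 0"
    by simp
  finally have G: "G * (u1 * w2 - w1 * u2) = 0" .
  show ?thesis
    using E G assms(3) by (cases "E = 0 \<and> G = 0") auto
qed

lemma card_pairs_less_le: "card {(i, j). i < j \<and> j \<le> (a::nat)} = (a + 1) choose 2"
proof (induction a)
  case 0
  have "{(i, j). i < j \<and> j \<le> (0::nat)} = {}" by auto
  then show ?case by (simp only:) simp
next
  case (Suc a)
  have split: "{(i, j). i < j \<and> j \<le> Suc a} = {(i, j). i < j \<and> j \<le> a} \<union> (\<lambda>i. (i, Suc a)) ` {..a}"
    by auto
  have "finite {(i, j). i < j \<and> j \<le> (a::nat)}"
    by (rule finite_subset[of _ "{..a} \<times> {..a}"]) auto
  then have "card {(i, j). i < j \<and> j \<le> Suc a} = card {(i, j). i < j \<and> j \<le> a} + card ((\<lambda>i. (i, Suc a)) ` {..a})"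
    unfolding split by (intro card_Un_disjoint) auto
  also have "card ((\<lambda>i. (i, Suc a)) ` {..a}) = Suc a"
    by (subst card_image) (auto simp: inj_on_def)
  finally show ?case
    using Suc by (simp add: numeral_2_eq_2)
qed

locale separation_curve =
  fixes n m \<alpha> :: nat and nk :: "nat \<Rightarrow> nat" and \<phi> :: "nat \<Rightarrow> real \<Rightarrow> real \<Rightarrow> real"
    and h :: "nat \<Rightarrow> nat \<Rightarrow> point \<Rightarrow> real" and M :: "point set"
  assumes alpha_le: "\<forall>k\<in>{1..m}. \<alpha> \<le> nk k"
    and M_open: "coord_open (coords n m \<alpha>) M"
    and h_smooth: "\<forall>k\<in>{1..m}. \<forall>i\<in>{1..nk k}. smooth_on (coords n m \<alpha>) M (h k i)"
    and curve: "\<forall>p\<in>M. \<forall>j\<in>{1..n}.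
        \<phi> 0 (p (Lam j)) (p (Mu j))
        + (\<Sum>k=1..m. \<phi> k (p (Lam j)) (p (Mu j)) *
             psi (nk k) \<alpha> (\<lambda>i. p (Cc k i)) (\<lambda>i. h k i p) (p (Lam j))) = 0"
    and nondeg: "\<forall>p\<in>M. \<forall>v :: nat \<Rightarrow> nat \<Rightarrow> real.
        (\<forall>j\<in>{1..n}. (\<Sum>k=1..m. \<phi> k (p (Lam j)) (p (Mu j)) *
             (\<Sum>i=1..nk k. v k i * (p (Lam j)) ^ (nk k - i))) = 0)
        \<longrightarrow> (\<forall>k\<in>{1..m}. \<forall>i\<in>{1..nk k}. v k i = 0)"
begin

abbreviation V :: "coord set" where "V \<equiv> coords n m \<alpha>"

definition curve_at :: "nat \<Rightarrow> point \<Rightarrow> real" where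
  "curve_at t q = \<phi> 0 (q (Lam t)) (q (Mu t))
     + (\<Sum>k=1..m. \<phi> k (q (Lam t)) (q (Mu t)) * psi (nk k) \<alpha> (\<lambda>i. q (Cc k i)) (\<lambda>i. h k i q) (q (Lam t)))"

text \<open>Nondegeneracy is injectivity of \<open>v \<mapsto> (curve_form v p t)\<^sub>t\<close>, where \<open>v k i\<close> stands for a
  variation of \<open>a\<^sup>(\<^sup>k\<^sup>)\<^sub>i\<close>.\<close>

definition curve_form :: "(nat \<Rightarrow> nat \<Rightarrow> real) \<Rightarrow> point \<Rightarrow> nat \<Rightarrow> real" where
  "curve_form v p t = (\<Sum>k=1..m. \<phi> k (p (Lam t)) (p (Mu t)) * (\<Sum>i=1..nk k. v k i * p (Lam t) ^ (nk k - i)))"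

lemma curve_at_eq_0: "q \<in> M \<Longrightarrow> t \<in> {1..n} \<Longrightarrow> curve_at t q = 0"
  using curve unfolding curve_at_def by blast

lemma curve_form_eq_0_imp_eq_0:
  assumes "p \<in> M" "\<forall>t\<in>{1..n}. curve_form v p t = 0" "k \<in> {1..m}" "i \<in> {1..nk k}"
  shows "v k i = 0"
  using nondeg assms unfolding curve_form_def by blast

lemma curve_form_diff: "curve_form (\<lambda>k i. u k i - w k i) p t = curve_form u p t - curve_form w p t"
  unfolding curve_form_def by (simp add: left_diff_distrib right_diff_distrib sum_subtractf)

lemma curve_form_add: "curve_form (\<lambda>k i. u k i + w k i) p t = curve_form u p t + curve_form w p t"
  unfolding curve_form_def by (simp add: distrib_left distrib_right sum.distrib)

lemma curve_form_cmult: "curve_form (\<lambda>k i. c * w k i) p t = c * curve_form w p t"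
  unfolding curve_form_def by (simp add: sum_distrib_left mult_ac)

lemma curve_form_sum: "curve_form (\<lambda>k i. \<Sum>a\<in>A. w a k i) p t = (\<Sum>a\<in>A. curve_form (w a) p t)"
  unfolding curve_form_def sum_distrib_left sum_distrib_right
  by (simp add: sum_distrib_left sum_distrib_right sum.swap[of _ A] mult_ac)

lemma h_differentiable_along:
  assumes "p \<in> M" "z \<in> V" "k \<in> {1..m}" "i \<in> {1..nk k}"
  shows "(\<lambda>\<tau>. h k i (p(z := \<tau>))) differentiable (at (p z))"
proof -
  have "smooth_on V M (h k i)"
    using h_smooth assms by blast
  then show ?thesis
    unfolding smooth_on_def using assms by (metis empty_set empty_subsetI ipd.simps(1))
qed

lemma has_real_derivative_curve_at:
  assumes p: "p \<in> M" and z: "z \<in> V" "z \<noteq> Lam t" "z \<noteq> Mu t"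
  shows "((\<lambda>\<tau>. curve_at t (p(z := \<tau>))) has_real_derivative
     curve_form (\<lambda>k i. pd z (h k i) p) p t
     + (\<Sum>k=1..m. \<phi> k (p (Lam t)) (p (Mu t)) *
          (\<Sum>j=1..\<alpha>. if z = Cc k j then p (Lam t) ^ (nk k - 1 + j) else 0))) (at (p z))"
proof -
  define L U where "L = p (Lam t)" and "U = p (Mu t)"
  have line: "(\<lambda>\<tau>. curve_at t (p(z := \<tau>))) = (\<lambda>\<tau>. \<phi> 0 L U + (\<Sum>k=1..m. \<phi> k L U *
     ((\<Sum>j=1..\<alpha>. (p(z := \<tau>)) (Cc k j) * L ^ (nk k - 1 + j)) + (\<Sum>i=1..nk k. h k i (p(z := \<tau>)) * L ^ (nk k - i)))))"
    using z by (simp add: curve_at_def psi_def L_def U_def)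
  have h_deriv: "((\<lambda>\<tau>. h k i (p(z := \<tau>))) has_real_derivative pd z (h k i) p) (at (p z))"
    if "k \<in> {1..m}" "i \<in> {1..nk k}" for k i
    using h_differentiable_along[OF p z(1) that] DERIV_deriv_iff_real_differentiable
    unfolding pd_def by fastforce
  have c_deriv: "((\<lambda>\<tau>. (p(z := \<tau>)) (Cc k j) * L ^ e) has_real_derivative
      (if z = Cc k j then L ^ e else 0)) (at (p z))" for k j e
    by (cases "z = Cc k j") (auto intro!: derivative_eq_intros)
  have "((\<lambda>\<tau>. curve_at t (p(z := \<tau>))) has_real_derivative 0 + (\<Sum>k=1..m. \<phi> k L U *
     ((\<Sum>j=1..\<alpha>. if z = Cc k j then L ^ (nk k - 1 + j) else 0) + (\<Sum>i=1..nk k. pd z (h k i) p * L ^ (nk k - i)))))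
     (at (p z))"
    unfolding line by (intro DERIV_add DERIV_const DERIV_sum DERIV_cmult DERIV_cmult_right c_deriv h_deriv) auto
  then show ?thesis
    unfolding curve_form_def L_def U_def by (simp add: distrib_left sum.distrib add.commute)
qed


lemma curve_derivative_eq_0:
  assumes "p \<in> M" "z \<in> V" "t \<in> {1..n}" "z \<noteq> Lam t" "z \<noteq> Mu t"
  shows "curve_form (\<lambda>k i. pd z (h k i) p) p t
     + (\<Sum>k=1..m. \<phi> k (p (Lam t)) (p (Mu t)) *
          (\<Sum>j=1..\<alpha>. if z = Cc k j then p (Lam t) ^ (nk k - 1 + j) else 0)) = 0"
  using curve_at_eq_0 assms(3)
  by (intro derivative_eq_0_if_vanishes_on_coord_open[OF M_open assms(1,2), where g = "curve_at t"]
      has_real_derivative_curve_at[OF assms(1,2,4,5)]) blast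

lemma curve_form_pd_canonical:
  assumes "p \<in> M" "l \<in> {1..n}" "z = Lam l \<or> z = Mu l" "t \<in> {1..n}" "t \<noteq> l"
  shows "curve_form (\<lambda>k i. pd z (h k i) p) p t = 0"
  using curve_derivative_eq_0[of p z t] assms by auto

lemma curve_form_pd_Cc:
  assumes "p \<in> M" "t \<in> {1..n}" "k' \<in> {1..m}" "q \<in> {1..\<alpha>}"
  shows "curve_form (\<lambda>k i. pd (Cc k' q) (h k i) p) p t
     = - (\<phi> k' (p (Lam t)) (p (Mu t)) * p (Lam t) ^ (nk k' - 1 + q))"
proof -
  have "(\<Sum>j=1..\<alpha>. if Cc k' q = Cc k j then p (Lam t) ^ (nk k - 1 + j) else 0)
      = (if k = k' then p (Lam t) ^ (nk k' - 1 + q) else 0)" for k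
    using assms(4) by (auto simp: sum.delta)
  then show ?thesis
    using curve_derivative_eq_0[of p "Cc k' q" t] assms
    by (simp add: if_0_arith_simps sum.delta' eq_neg_iff_add_eq_0)
qed


lemma pd_h_recursion:
  assumes p: "p \<in> M" and l: "l \<in> {1..n}" and z: "z = Lam l \<or> z = Mu l" and i: "i \<le> \<alpha>"
    and k: "k \<in> {1..m}" and s: "s \<in> {1..nk k}"
  shows "p (Lam l) ^ i * pd z (h k s) p
       + (\<Sum>k'=1..m. \<Sum>j=1..i. pd z (h k' j) p * pd (Cc k' (i - j + 1)) (h k s) p)
     = (if s + i \<le> nk k then pd z (h k (s + i)) p else 0)"
proof -
  define D where "D k s = pd z (h k s) p" for k s
  define S where "S k s = (\<Sum>k'=1..m. \<Sum>j=1..i. D k' j * pd (Cc k' (i - j + 1)) (h k s) p)" for k s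
  define R where "R k s = (if s + i \<le> nk k then D k (s + i) else 0)" for k s
  have "curve_form (\<lambda>k s. p (Lam l) ^ i * D k s + S k s - R k s) p t = 0" if t: "t \<in> {1..n}" for t
  proof -
    define L f where "L = p (Lam t)" and "f k = \<phi> k (p (Lam t)) (p (Mu t))" for k
    have D_off_diagonal: "(p (Lam l) ^ i - L ^ i) * curve_form D p t = 0"
      using curve_form_pd_canonical[OF p l z t] unfolding D_def L_def by (cases "t = l") auto
    have "curve_form S p t = (\<Sum>k'=1..m. \<Sum>j=1..i. D k' j * - (f k' * L ^ (nk k' + i - j)))"
      unfolding S_def curve_form_sum curve_form_cmult
    proof (intro sum.cong refl)
      fix k' j assume k': "k' \<in> {1..m}" and j: "j \<in> {1..i}"
      have q: "i - j + 1 \<in> {1..\<alpha>}"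
        using i j by auto
      have exponent: "nk k' - 1 + (i - j + 1) = nk k' + i - j"
        using k' j alpha_le i by force
      show "D k' j * curve_form (\<lambda>k s. pd (Cc k' (i - j + 1)) (h k s) p) p t
          = D k' j * - (f k' * L ^ (nk k' + i - j))"
        unfolding curve_form_pd_Cc[OF p t k' q] exponent f_def L_def by (rule refl)
    qed
    also have "\<dots> = - (\<Sum>k=1..m. f k * (\<Sum>j=1..i. D k j * L ^ (nk k + i - j)))"
      by (simp add: sum_distrib_left sum_negf mult_ac)
    finally have S_form: "curve_form S p t = \<dots>" .
    have "(\<Sum>k=1..m. f k * (\<Sum>j=1..i. D k j * L ^ (nk k + i - j))) + curve_form R p t
        = (\<Sum>k=1..m. f k * ((\<Sum>j=1..i. D k j * L ^ (nk k + i - j)) + (\<Sum>s=1..nk k. R k s * L ^ (nk k - s))))"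
      unfolding curve_form_def f_def L_def by (simp add: sum.distrib distrib_left)
    also have "\<dots> = (\<Sum>k=1..m. f k * (L ^ i * (\<Sum>s=1..nk k. D k s * L ^ (nk k - s))))"
      unfolding R_def using alpha_le i
      by (intro sum.cong refl arg_cong2[where f = "(*)"] power_mult_coefficient_sum) force+
    also have "\<dots> = L ^ i * curve_form D p t"
      unfolding curve_form_def f_def L_def by (simp add: sum_distrib_left mult_ac)
    finally have R_form: "(\<Sum>k=1..m. f k * (\<Sum>j=1..i. D k j * L ^ (nk k + i - j))) + curve_form R p t
        = L ^ i * curve_form D p t" .
    have "curve_form (\<lambda>k s. p (Lam l) ^ i * D k s + S k s - R k s) p t
        = p (Lam l) ^ i * curve_form D p t + curve_form S p t - curve_form R p t"
      by (simp only: curve_form_diff curve_form_add curve_form_cmult)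
    also have "\<dots> = (p (Lam l) ^ i - L ^ i) * curve_form D p t"
      using S_form R_form by (simp add: algebra_simps)
    finally show ?thesis
      using D_off_diagonal by simp
  qed
  then have "p (Lam l) ^ i * D k s + S k s - R k s = 0"
    by (intro curve_form_eq_0_imp_eq_0[OF p _ k s, of "\<lambda>k s. p (Lam l) ^ i * D k s + S k s - R k s"]) auto
  then show ?thesis
    unfolding D_def S_def R_def by simp
qed


lemma proportional_if_curve_form_vanishes_off:
  assumes p: "p \<in> M" and l: "l \<in> {1..n}"
    and u: "\<forall>t\<in>{1..n}. t \<noteq> l \<longrightarrow> curve_form u p t = 0"
    and w: "\<forall>t\<in>{1..n}. t \<noteq> l \<longrightarrow> curve_form w p t = 0"
    and k: "k \<in> {1..m}" "i \<in> {1..nk k}"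
  shows "curve_form w p l * u k i = curve_form u p l * w k i"
proof -
  define v where "v k i = curve_form w p l * u k i - curve_form u p l * w k i" for k i
  have "\<forall>t\<in>{1..n}. curve_form v p t = 0"
  proof
    fix t assume "t \<in> {1..n}"
    have "curve_form v p t = curve_form w p l * curve_form u p t - curve_form u p l * curve_form w p t"
      unfolding v_def by (simp only: curve_form_diff curve_form_cmult)
    then show "curve_form v p t = 0"
      using u w \<open>t \<in> {1..n}\<close> by (cases "t = l") simp_all
  qed
  then have "v k i = 0"
    by (rule curve_form_eq_0_imp_eq_0[OF p _ k])
  then show ?thesis
    unfolding v_def by simp
qed

lemma pd_h_Poisson_commute:
  assumes p: "p \<in> M" and l: "l \<in> {1..n}"
    and a: "ka \<in> {1..m}" "sa \<in> {1..nk ka}" and b: "kb \<in> {1..m}" "sb \<in> {1..nk kb}"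
  shows "pd (Mu l) (h ka sa) p * pd (Lam l) (h kb sb) p - pd (Lam l) (h ka sa) p * pd (Mu l) (h kb sb) p = 0"
proof -
  define u w where "u k s = pd (Mu l) (h k s) p" and "w k s = pd (Lam l) (h k s) p" for k s
  have u_off: "\<forall>t\<in>{1..n}. t \<noteq> l \<longrightarrow> curve_form u p t = 0"
    using curve_form_pd_canonical[OF p l, of "Mu l"] unfolding u_def by simp
  have w_off: "\<forall>t\<in>{1..n}. t \<noteq> l \<longrightarrow> curve_form w p t = 0"
    using curve_form_pd_canonical[OF p l, of "Lam l"] unfolding w_def by simp
  have "u ka sa = 0 \<and> u kb sb = 0" if "curve_form u p l = 0"
  proof -
    have "\<forall>t\<in>{1..n}. curve_form u p t = 0"
      using u_off that by (metis (full_types))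
    then show ?thesis
      using curve_form_eq_0_imp_eq_0[OF p] a b by blast
  qed
  then have "u ka sa * w kb sb - w ka sa * u kb sb = 0"
    using proportional_if_curve_form_vanishes_off[OF p l u_off w_off] a b
    by (intro det_eq_0_if_proportional[where E = "curve_form w p l" and G = "curve_form u p l"]) auto
  then show ?thesis
    unfolding u_def w_def .
qed


lemma contr_pis_h:
  assumes p: "p \<in> M" and k: "k \<in> {1..m}" and s: "s \<in> {1..nk k}" and i: "i \<le> \<alpha>"
  shows "contr V (pis V n m h i) (h k s) x p = (if s + i \<le> nk k then Xf V n h k (s + i) x p else 0)"
proof (cases x)
  case (Lam l)
  then show ?thesis
    using pd_h_recursion[OF p _ _ i k s, of l "Mu l"]
    by (cases "l \<in> {1..n}") (auto simp: contr_pis_Lam[OF i] Xf_Lam)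
next
  case (Mu l)
  then show ?thesis
    using pd_h_recursion[OF p _ _ i k s, of l "Lam l"]
    by (cases "l \<in> {1..n}") (auto simp: contr_pis_Mu[OF i] Xf_Mu)
next
  case (Cc a b)
  have "(\<Sum>y\<in>V. Xf V n h k' j y p * pd y (h k s) p) = 0" if "k' \<in> {1..m}" "j \<in> {1..i}" for k' j
  proof -
    have "j \<in> {1..nk k'}"
      using that alpha_le i by force
    then show ?thesis
      unfolding sum_Xf_mult_pd using pd_h_Poisson_commute[OF p _ that(1) _ k s] by simp
  qed
  then show ?thesis
    unfolding Cc contr_pis_Cc[OF i] by (simp add: Xf_Cc sum.neutral)
qed

lemma contr_pis_c:
  assumes k: "k \<in> {1..m}" and q: "q \<in> {1..\<alpha>}" and s: "s \<le> \<alpha>"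
  shows "contr V (pis V n m h s) (\<lambda>p. p (Cc k q)) x p = (if q \<le> s then Xf V n h k (s - q + 1) x p else 0)"
proof -
  have "contr V (pis V n m h s) (\<lambda>p. p (Cc k q)) x p
     = (\<Sum>k'=1..m. \<Sum>j=1..s. if k' = k \<and> j = s + 1 - q then Xf V n h k' j x p else 0)"
    unfolding contr_pis[OF s] pd_coordinate
    by (simp add: if_0_arith_simps sum.delta Xf_Cc cong: if_cong) (intro sum.cong refl, auto)
  also have "\<dots> = (\<Sum>k'=1..m. if k' = k then (\<Sum>j=1..s. if j = s + 1 - q then Xf V n h k' j x p else 0) else 0)"
    by (intro sum.cong refl) auto
  also have "\<dots> = (\<Sum>j=1..s. if j = s + 1 - q then Xf V n h k j x p else 0)"
    using k by (simp add: sum.delta)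
  also have "\<dots> = (if q \<le> s then Xf V n h k (s - q + 1) x p else 0)"
    using q by (auto simp: sum.delta Suc_diff_le)
  finally show ?thesis .
qed

text \<open>\<open>Hext h k (r - i)\<close> is \<open>c\<^sup>(\<^sup>k\<^sup>)\<^sub>i\<^sub>-\<^sub>r\<^sub>+\<^sub>1\<close> for \<open>r \<le> i\<close> and \<open>h\<^sup>(\<^sup>k\<^sup>)\<^sub>r\<^sub>-\<^sub>i\<close> beyond; the side condition
  excludes \<open>r = 0\<close>, \<open>i = \<alpha>\<close>, where it would be the nonexistent \<open>c\<^sup>(\<^sup>k\<^sup>)\<^sub>\<alpha>\<^sub>+\<^sub>1\<close>.\<close>

lemma contr_pis_Hext:
  assumes p: "p \<in> M" and k: "k \<in> {1..m}" and i: "i \<le> \<alpha>"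
    and r: "r \<le> nk k + i" "i < \<alpha> \<or> 0 < r"
  shows "contr V (pis V n m h i) (Hext h k (- int i + int r)) x p
     = (if 1 \<le> r \<and> r \<le> nk k then Xf V n h k r x p else 0)"
proof (cases "r \<le> i")
  case True
  then have "nat (1 - (- int i + int r)) = i - r + 1"
    by (simp add: of_nat_diff)
  then have "Hext h k (- int i + int r) = (\<lambda>p. p (Cc k (i - r + 1)))"
    using True unfolding Hext_def by simp
  moreover have "i - r + 1 \<in> {1..\<alpha>}" "i \<le> \<alpha>" "r \<le> nk k"
    using True i r alpha_le k by force+
  ultimately show ?thesis
    using contr_pis_c[OF k _ i] True by auto
next
  case False
  then have "Hext h k (- int i + int r) = h k (r - i)"
    unfolding Hext_def by (simp add: of_nat_diff nat_diff_distrib)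
  moreover have "r - i \<in> {1..nk k}"
    using False r by auto
  ultimately show ?thesis
    using contr_pis_h[OF p k _ i] False by auto
qed

lemma bihamiltonian_chain:
  assumes k: "k \<in> {1..m}" and ij: "i < j" "j \<le> \<alpha>" and p: "p \<in> M"
  shows "contr V (pis V n m h i) (Hext h k (- int i)) x p = 0
    \<and> (\<forall>r\<in>{1..nk k}.
         contr V (pis V n m h i) (Hext h k (- int i + int r)) x p = Xf V n h k r x p
       \<and> contr V (pis V n m h j) (Hext h k (- int j + int r)) x p = Xf V n h k r x p)
    \<and> contr V (pis V n m h j) (Hext h k (- int j + int (nk k) + 1)) x p = 0"
proof -
  have last_index: "- int j + int (nk k) + 1 = - int j + int (nk k + 1)"
    by simp
  have "contr V (pis V n m h j) (Hext h k (- int j + int (nk k) + 1)) x p = 0"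
    unfolding last_index using contr_pis_Hext[OF p k, of j "nk k + 1"] ij by simp
  moreover have "contr V (pis V n m h i) (Hext h k (- int i)) x p = 0"
    using contr_pis_Hext[OF p k, of i 0] ij by simp
  ultimately show ?thesis
    using contr_pis_Hext[OF p k, of i] contr_pis_Hext[OF p k, of j] ij by auto
qed

end

theorem corollary14:
  fixes n m \<alpha> :: nat and nk :: "nat \<Rightarrow> nat"
    and \<phi> :: "nat \<Rightarrow> real \<Rightarrow> real \<Rightarrow> real"
    and h :: "nat \<Rightarrow> nat \<Rightarrow> point \<Rightarrow> real"
    and M :: "point set"
  assumes "n \<ge> 1" and "m \<ge> 1"
    and nk_pos: "\<forall>k\<in>{1..m}. nk k \<ge> 1"
    and nk_sum: "(\<Sum>k=1..m. nk k) = n"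
    and alpha: "1 \<le> \<alpha>" "\<forall>k\<in>{1..m}. \<alpha> \<le> nk k"
    and phi_smooth: "\<forall>k\<in>{0..m}. smooth2 (\<phi> k)"
    and phi_m: "\<forall>l u. \<phi> m l u = 1"
    and M_open: "coord_open (coords n m \<alpha>) M"
    and h_smooth: "\<forall>k\<in>{1..m}. \<forall>i\<in>{1..nk k}. smooth_on (coords n m \<alpha>) M (h k i)"
    and curve: "\<forall>p\<in>M. \<forall>j\<in>{1..n}.
        \<phi> 0 (p (Lam j)) (p (Mu j))
        + (\<Sum>k=1..m. \<phi> k (p (Lam j)) (p (Mu j)) *
             psi (nk k) \<alpha> (\<lambda>i. p (Cc k i)) (\<lambda>i. h k i p) (p (Lam j))) = 0"
    and nondeg: "\<forall>p\<in>M. \<forall>v :: nat \<Rightarrow> nat \<Rightarrow> real.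
        (\<forall>j\<in>{1..n}. (\<Sum>k=1..m. \<phi> k (p (Lam j)) (p (Mu j)) *
             (\<Sum>i=1..nk k. v k i * (p (Lam j)) ^ (nk k - i))) = 0)
        \<longrightarrow> (\<forall>k\<in>{1..m}. \<forall>i\<in>{1..nk k}. v k i = 0)"
  shows "(\<forall>k\<in>{1..m}. \<forall>i j. i < j \<and> j \<le> \<alpha> \<longrightarrow>
      (\<forall>p\<in>M. \<forall>x.
         contr (coords n m \<alpha>) (pis (coords n m \<alpha>) n m h i) (Hext h k (- int i)) x p = 0
       \<and> (\<forall>r\<in>{1..nk k}.
            contr (coords n m \<alpha>) (pis (coords n m \<alpha>) n m h i) (Hext h k (- int i + int r)) x p
              = Xf (coords n m \<alpha>) n h k r x p
          \<and> contr (coords n m \<alpha>) (pis (coords n m \<alpha>) n m h j) (Hext h k (- int j + int r)) x p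
              = Xf (coords n m \<alpha>) n h k r x p)
       \<and> contr (coords n m \<alpha>) (pis (coords n m \<alpha>) n m h j) (Hext h k (- int j + int (nk k) + 1)) x p = 0))
    \<and> card {(i, j). i < j \<and> j \<le> \<alpha>} = (\<alpha> + 1) choose 2"
proof -
  interpret separation_curve n m \<alpha> nk \<phi> h M
    using alpha(2) M_open h_smooth curve nondeg by unfold_locales
  show ?thesis
    using bihamiltonian_chain card_pairs_less_le by blast
qed

end
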